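(* Let $M^2$ be a surface in $\mathbb{R}^4$ free of flat points. Then $M^2$ is minimal (its mean curvature vector field $H$ vanishes identically) if and only if at each point of $M^2$ the tangent indicatrix $\chi$ is a circle, i.e. the two principal normal curvatures satisfy $\nu'=\nu''$.
   Context: Let $M^2: z=z(u,v)$ be a regular surface in $\mathbb{R}^4$ with first fundamental form $I=E\,du^2+2F\,du\,dv+G\,dv^2$, $W=\sqrt{EG-F^2}$. Choose an orthonormal normal frame $\{e_1,e_2\}$ with $\{z_u,z_v,e_1,e_2\}$ positively oriented, write $\sigma(z_u,z_u)=c_{11}^1e_1+c_{11}^2e_2$, $\sigma(z_u,z_v)=c_{12}^1e_1+c_{12}^2e_2$, $\sigma(z_v,z_v)=c_{22}^1e_1+c_{22}^2e_2$ ($\sigma$ the second fundamental form), and set $L=\frac{2}{W}(c_{11}^1c_{12}^2-c_{12}^1c_{11}^2)$, $M=\frac{1}{W}(c_{11}^1c_{22}^2-c_{22}^1c_{11}^2)$, $N=\frac{2}{W}(c_{12}^1c_{22}^2-c_{22}^1c_{12}^2)$. The quadratic form $II(\lambda,\mu)=L\lambda^2+2M\lambda\mu+N\mu^2$ on tangent vectors $\lambda z_u+\mu z_v$ is the (invariant) second fundamental form. A point is flat if $L=M=N=0$; "free of flat points" means $(L,M,N)\ne(0,0,0)$ everywhere. At each point, the principal normal curvatures $\nu',\nu''$ are the two roots of $(EG-F^2)\nu^2-(EN+GL-2FM)\nu+(LN-M^2)=0$ (the eigenvalues of $II$ relative to $I$), and the principal directions are the corresponding $I$-orthogonal eigendirections.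 The tangent indicatrix $\chi$ at $p$ is the conic in $T_pM^2$ given, in Cartesian coordinates $(X,Y)$ with respect to an orthonormal basis of principal directions, by $\nu'X^2+\nu''Y^2=\varepsilon$, $\varepsilon=\pm1$. *)

theory Defs
  imports "HOL-Analysis.Analysis"
begin

type_synonym surf = "real \<times> real \<Rightarrow> real^4"

definition pu :: "surf \<Rightarrow> surf" where
  "pu z = (\<lambda>(u,v). vector_derivative (\<lambda>s. z (s,v)) (at u))"
definition pv :: "surf \<Rightarrow> surf" where
  "pv z = (\<lambda>(u,v). vector_derivative (\<lambda>t. z (u,t)) (at v))"

definition fE :: "surf \<Rightarrow> real \<times> real \<Rightarrow> real" where "fE z p = pu z p \<bullet> pu z p"
definition fF :: "surf \<Rightarrow> real \<times> real \<Rightarrow> real" where "fF z p = pu z p \<bullet> pv z p"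
definition fG :: "surf \<Rightarrow> real \<times> real \<Rightarrow> real" where "fG z p = pv z p \<bullet> pv z p"
definition fW :: "surf \<Rightarrow> real \<times> real \<Rightarrow> real" where
  "fW z p = sqrt (fE z p * fG z p - (fF z p)^2)"

definition regular_surface :: "surf \<Rightarrow> (real \<times> real) set \<Rightarrow> bool" where
  "regular_surface z U \<longleftrightarrow> open U \<and> z differentiable_on U
     \<and> (\<forall>p\<in>U. (\<lambda>s. z (s, snd p)) differentiable (at (fst p))
              \<and> (\<lambda>t. z (fst p, t)) differentiable (at (snd p)))
     \<and> pu z differentiable_on U \<and> pv z differentiable_on U
     \<and> (\<forall>p\<in>U. (\<lambda>s. pu z (s, snd p)) differentiable (at (fst p))
              \<and> (\<lambda>t. pu z (fst p, t)) differentiable (at (snd p))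
              \<and> (\<lambda>s. pv z (s, snd p)) differentiable (at (fst p))
              \<and> (\<lambda>t. pv z (fst p, t)) differentiable (at (snd p)))
     \<and> continuous_on U (pu (pu z)) \<and> continuous_on U (pv (pu z))
     \<and> continuous_on U (pu (pv z)) \<and> continuous_on U (pv (pv z))
     \<and> (\<forall>p\<in>U. fE z p * fG z p - (fF z p)^2 > 0)"

definition normal_frame :: "surf \<Rightarrow> (real \<times> real) set \<Rightarrow> surf \<Rightarrow> surf \<Rightarrow> bool" where
  "normal_frame z U e1 e2 \<longleftrightarrow> (\<forall>p\<in>U.
      e1 p \<bullet> e1 p = 1 \<and> e2 p \<bullet> e2 p = 1 \<and> e1 p \<bullet> e2 p = 0
    \<and> e1 p \<bullet> pu z p = 0 \<and> e1 p \<bullet> pv z p = 0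
    \<and> e2 p \<bullet> pu z p = 0 \<and> e2 p \<bullet> pv z p = 0
    \<and> det (vector [pu z p, pv z p, e1 p, e2 p] :: real^4^4) > 0)"

definition c11 :: "surf \<Rightarrow> surf \<Rightarrow> real \<times> real \<Rightarrow> real" where
  "c11 z e p = pu (pu z) p \<bullet> e p"
definition c12 :: "surf \<Rightarrow> surf \<Rightarrow> real \<times> real \<Rightarrow> real" where
  "c12 z e p = pv (pu z) p \<bullet> e p"
definition c22 :: "surf \<Rightarrow> surf \<Rightarrow> real \<times> real \<Rightarrow> real" where
  "c22 z e p = pv (pv z) p \<bullet> e p"

definition sigma11 :: "surf \<Rightarrow> surf \<Rightarrow> surf \<Rightarrow> surf" where
  "sigma11 z e1 e2 p = c11 z e1 p *\<^sub>R e1 p + c11 z e2 p *\<^sub>R e2 p"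
definition sigma12 :: "surf \<Rightarrow> surf \<Rightarrow> surf \<Rightarrow> surf" where
  "sigma12 z e1 e2 p = c12 z e1 p *\<^sub>R e1 p + c12 z e2 p *\<^sub>R e2 p"
definition sigma22 :: "surf \<Rightarrow> surf \<Rightarrow> surf \<Rightarrow> surf" where
  "sigma22 z e1 e2 p = c22 z e1 p *\<^sub>R e1 p + c22 z e2 p *\<^sub>R e2 p"

text \<open>Mean curvature vector H = (1/2) trace_I sigma.\<close>
definition mean_curv :: "surf \<Rightarrow> surf \<Rightarrow> surf \<Rightarrow> surf" where
  "mean_curv z e1 e2 p = (1 / (2 * (fW z p)^2)) *\<^sub>R
     (fG z p *\<^sub>R sigma11 z e1 e2 p - (2 * fF z p) *\<^sub>R sigma12 z e1 e2 p
      + fE z p *\<^sub>R sigma22 z e1 e2 p)"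

definition fL :: "surf \<Rightarrow> surf \<Rightarrow> surf \<Rightarrow> real \<times> real \<Rightarrow> real" where
  "fL z e1 e2 p = 2 / fW z p * (c11 z e1 p * c12 z e2 p - c12 z e1 p * c11 z e2 p)"
definition fM :: "surf \<Rightarrow> surf \<Rightarrow> surf \<Rightarrow> real \<times> real \<Rightarrow> real" where
  "fM z e1 e2 p = 1 / fW z p * (c11 z e1 p * c22 z e2 p - c22 z e1 p * c11 z e2 p)"
definition fN :: "surf \<Rightarrow> surf \<Rightarrow> surf \<Rightarrow> real \<times> real \<Rightarrow> real" where
  "fN z e1 e2 p = 2 / fW z p * (c12 z e1 p * c22 z e2 p - c22 z e1 p * c12 z e2 p)"

text \<open>Principal normal curvatures: the two roots of
  (EG-F^2) nu^2 - (EN+GL-2FM) nu + (LN-M^2) = 0.\<close>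
definition pnc_disc :: "surf \<Rightarrow> surf \<Rightarrow> surf \<Rightarrow> real \<times> real \<Rightarrow> real" where
  "pnc_disc z e1 e2 p =
     (fE z p * fN z e1 e2 p + fG z p * fL z e1 e2 p - 2 * fF z p * fM z e1 e2 p)^2
     - 4 * (fE z p * fG z p - (fF z p)^2) * (fL z e1 e2 p * fN z e1 e2 p - (fM z e1 e2 p)^2)"
definition nu1 :: "surf \<Rightarrow> surf \<Rightarrow> surf \<Rightarrow> real \<times> real \<Rightarrow> real" where
  "nu1 z e1 e2 p =
     ((fE z p * fN z e1 e2 p + fG z p * fL z e1 e2 p - 2 * fF z p * fM z e1 e2 p)
       + sqrt (pnc_disc z e1 e2 p)) / (2 * (fE z p * fG z p - (fF z p)^2))"
definition nu2 :: "surf \<Rightarrow> surf \<Rightarrow> surf \<Rightarrow> real \<times> real \<Rightarrow> real" where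
  "nu2 z e1 e2 p =
     ((fE z p * fN z e1 e2 p + fG z p * fL z e1 e2 p - 2 * fF z p * fM z e1 e2 p)
       - sqrt (pnc_disc z e1 e2 p)) / (2 * (fE z p * fG z p - (fF z p)^2))"

end

theory Submission imports Defs begin

text \<open>Both conditions say, pointwise, that the invariant form II is a multiple of I.
  The mean curvature vanishes iff both normal components of the I-trace of \<sigma> vanish;
  expanding L, M, N in the coefficients c_ij^k shows this is equivalent to
  (L, M, N) being proportional to (E, F, G), provided (L, M, N) \<noteq> 0. On the other side,
  E^2 times the discriminant of the principal-curvature equation is a sum of squares
  which vanishes exactly when II is proportional to I, i.e. when \<nu>' = \<nu>''.\<close>

lemma orthonormal_combination_eq_0_iff:
  fixes u v :: "'a::real_inner"
  assumes "u \<bullet> u = 1" "v \<bullet> v = 1" "u \<bullet> v = 0"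
  shows "a *\<^sub>R u + b *\<^sub>R v = 0 \<longleftrightarrow> a = 0 \<and> b = 0"
proof
  assume h: "a *\<^sub>R u + b *\<^sub>R v = 0"
  have "u \<bullet> (a *\<^sub>R u + b *\<^sub>R v) = a" "v \<bullet> (a *\<^sub>R u + b *\<^sub>R v) = b"
    using assms by (simp_all add: inner_add_right inner_commute)
  then show "a = 0 \<and> b = 0" using h by (metis inner_zero_right)
qed simp

lemma gram_det_pos_imp_ne_0:
  fixes E F G :: real
  assumes "E*G - F^2 > 0"
  shows "E \<noteq> 0"
proof
  assume "E = 0"
  with assms show False using zero_le_power2[of F] by simp
qed

lemma trace_free_iff_proportional:
  fixes E F G a11 a12 a22 b11 b12 b22 :: real
  defines "l \<equiv> a11*b12 - a12*b11" and "m \<equiv> a11*b22 - a22*b11" and "n \<equiv> a12*b22 - a22*b12"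
  assumes nonflat: "(l, m, n) \<noteq> (0, 0, 0)" and "E \<noteq> 0"
  shows "(G*a11 - 2*F*a12 + E*a22 = 0 \<and> G*b11 - 2*F*b12 + E*b22 = 0)
           \<longleftrightarrow> (E*m = 2*F*l \<and> E*n = G*l)"
proof
  assume "G*a11 - 2*F*a12 + E*a22 = 0 \<and> G*b11 - 2*F*b12 + E*b22 = 0"
  then show "E*m = 2*F*l \<and> E*n = G*l" unfolding l_def m_def n_def by algebra
next
  assume h: "E*m = 2*F*l \<and> E*n = G*l"
  have "l \<noteq> 0" using h nonflat \<open>E \<noteq> 0\<close> by auto
  moreover have "l * (G*a11 - 2*F*a12 + E*a22) = 0" "l * (G*b11 - 2*F*b12 + E*b22) = 0"
    using h unfolding l_def m_def n_def by algebra+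
  ultimately show "G*a11 - 2*F*a12 + E*a22 = 0 \<and> G*b11 - 2*F*b12 + E*b22 = 0" by simp
qed

lemma binary_form_disc_sum_of_squares:
  fixes E F G L M N :: real
  shows "E^2 * ((E*N + G*L - 2*F*M)^2 - 4*(E*G - F^2)*(L*N - M^2))
           = (E*(E*N - G*L) - 2*F*(E*M - F*L))^2 + 4*(E*G - F^2)*(E*M - F*L)^2"
  by algebra

lemma binary_form_disc_eq_0_iff:
  fixes E F G L M N :: real
  assumes pos: "E*G - F^2 > 0"
  shows "(E*N + G*L - 2*F*M)^2 - 4*(E*G - F^2)*(L*N - M^2) = 0
           \<longleftrightarrow> E*M = F*L \<and> E*N = G*L" (is "?d = 0 \<longleftrightarrow> _")
proof -
  have "E \<noteq> 0" using pos by (rule gram_det_pos_imp_ne_0)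
  have "?d = 0 \<longleftrightarrow> (E*(E*N - G*L) - 2*F*(E*M - F*L))^2 + 4*(E*G - F^2)*(E*M - F*L)^2 = 0"
    using binary_form_disc_sum_of_squares[of E N G L F M] \<open>E \<noteq> 0\<close> by auto
  also have "\<dots> \<longleftrightarrow> (E*(E*N - G*L) - 2*F*(E*M - F*L))^2 = 0 \<and> 4*(E*G - F^2)*(E*M - F*L)^2 = 0"
    using pos by (intro add_nonneg_eq_0_iff) simp_all
  also have "\<dots> \<longleftrightarrow> E*(E*N - G*L) - 2*F*(E*M - F*L) = 0 \<and> E*M - F*L = 0"
    using pos by simp
  also have "\<dots> \<longleftrightarrow> E*M = F*L \<and> E*N = G*L"
    using \<open>E \<noteq> 0\<close> by auto
  finally show ?thesis .
qed

lemma mean_curv_eq_0_iff: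
  assumes "fE z p * fG z p - (fF z p)^2 > 0"
    and "e1 p \<bullet> e1 p = 1" "e2 p \<bullet> e2 p = 1" "e1 p \<bullet> e2 p = 0"
  shows "mean_curv z e1 e2 p = 0 \<longleftrightarrow>
    fG z p * c11 z e1 p - 2 * fF z p * c12 z e1 p + fE z p * c22 z e1 p = 0 \<and>
    fG z p * c11 z e2 p - 2 * fF z p * c12 z e2 p + fE z p * c22 z e2 p = 0"
proof -
  have "fW z p > 0" unfolding fW_def using assms(1) by simp
  moreover have "mean_curv z e1 e2 p = (1 / (2 * (fW z p)^2)) *\<^sub>R
      ((fG z p * c11 z e1 p - 2 * fF z p * c12 z e1 p + fE z p * c22 z e1 p) *\<^sub>R e1 p
       + (fG z p * c11 z e2 p - 2 * fF z p * c12 z e2 p + fE z p * c22 z e2 p) *\<^sub>R e2 p)"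
    unfolding mean_curv_def sigma11_def sigma12_def sigma22_def by (simp add: algebra_simps)
  ultimately show ?thesis
    using orthonormal_combination_eq_0_iff[OF assms(2-4)] by simp
qed

lemma nu1_eq_nu2_iff:
  assumes "fE z p * fG z p - (fF z p)^2 > 0"
  shows "nu1 z e1 e2 p = nu2 z e1 e2 p \<longleftrightarrow> pnc_disc z e1 e2 p = 0"
  unfolding nu1_def nu2_def using assms by (auto simp: divide_simps)

lemma mean_curv_eq_0_iff_nu1_eq_nu2:
  assumes pos: "fE z p * fG z p - (fF z p)^2 > 0"
    and frame: "e1 p \<bullet> e1 p = 1" "e2 p \<bullet> e2 p = 1" "e1 p \<bullet> e2 p = 0"
    and nonflat: "(fL z e1 e2 p, fM z e1 e2 p, fN z e1 e2 p) \<noteq> (0, 0, 0)"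
  shows "mean_curv z e1 e2 p = 0 \<longleftrightarrow> nu1 z e1 e2 p = nu2 z e1 e2 p"
proof -
  define E F G where "E = fE z p" "F = fF z p" "G = fG z p"
  define L M N where "L = fL z e1 e2 p" "M = fM z e1 e2 p" "N = fN z e1 e2 p"
  define l m n where
    "l = c11 z e1 p * c12 z e2 p - c12 z e1 p * c11 z e2 p"
    "m = c11 z e1 p * c22 z e2 p - c22 z e1 p * c11 z e2 p"
    "n = c12 z e1 p * c22 z e2 p - c22 z e1 p * c12 z e2 p"
  have W: "fW z p > 0" unfolding fW_def using pos by simp
  have LMN: "L = 2 * l / fW z p" "M = m / fW z p" "N = 2 * n / fW z p"
    unfolding L_M_N_def l_m_n_def fL_def fM_def fN_def by simp_all
  have "(l, m, n) \<noteq> (0, 0, 0)" using nonflat W LMN L_M_N_def by auto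
  moreover have "E \<noteq> 0" using pos unfolding E_F_G_def by (rule gram_det_pos_imp_ne_0)
  ultimately have "mean_curv z e1 e2 p = 0 \<longleftrightarrow> E*m = 2*F*l \<and> E*n = G*l"
    unfolding mean_curv_eq_0_iff[of z p e1 e2, OF pos frame] E_F_G_def l_m_n_def
    by (rule trace_free_iff_proportional)
  also have "\<dots> \<longleftrightarrow> (E*M - F*L) * fW z p = 0 \<and> (E*N - G*L) * fW z p = 0"
    unfolding LMN using W by (auto simp: field_simps)
  also have "\<dots> \<longleftrightarrow> E*M = F*L \<and> E*N = G*L"
    using W by simp
  also have "\<dots> \<longleftrightarrow> pnc_disc z e1 e2 p = 0"
    using binary_form_disc_eq_0_iff[of E G F] pos
    unfolding pnc_disc_def E_F_G_def L_M_N_def by simp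
  also have "\<dots> \<longleftrightarrow> nu1 z e1 e2 p = nu2 z e1 e2 p"
    using nu1_eq_nu2_iff[OF pos] by simp
  finally show ?thesis .
qed

theorem proposition3p3:
  fixes z e1 e2 :: surf and U :: "(real \<times> real) set"
  assumes "regular_surface z U"
    and "normal_frame z U e1 e2"
    and no_flat: "\<forall>p\<in>U. (fL z e1 e2 p, fM z e1 e2 p, fN z e1 e2 p) \<noteq> (0, 0, 0)"
  shows "(\<forall>p\<in>U. mean_curv z e1 e2 p = 0) \<longleftrightarrow> (\<forall>p\<in>U. nu1 z e1 e2 p = nu2 z e1 e2 p)"
proof -
  have "mean_curv z e1 e2 p = 0 \<longleftrightarrow> nu1 z e1 e2 p = nu2 z e1 e2 p" if "p \<in> U" for p
    using mean_curv_eq_0_iff_nu1_eq_nu2 assms that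
    unfolding regular_surface_def normal_frame_def by blast
  then show ?thesis by blast
qed

end
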